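(* Let $\alpha=\exp\left(\frac{2\pi i}{5}\right)$, let $c,x\in\mathbb{C}$, let $a_1,\dots,a_p\in\mathbb{C}$ and $b_1,\dots,b_q\in\mathbb{C}\setminus\{0,-1,-2,\dots\}$, and suppose either $5p\le 5q+4$ (with $x$ arbitrary), or $p=q+1$ and $\left|\left(\frac{cx^2}{5^{1+q-p}}\right)^5\right|<1$. Then $$\sum_{k=0}^{4}\alpha^{k}\,{}_pF_q\left[\begin{array}{c}a_1,\dots,a_p;\\ b_1,\dots,b_q;\end{array}c(x\alpha^k)^2\right] =\frac{5c^2x^4}{2}\,\frac{\prod_{i=1}^{p}(a_i)_2}{\prod_{i=1}^{q}(b_i)_2}\;{}_{5p}F_{5q+4}\left[\begin{array}{c}\Big\{\tfrac{a_j+2}{5},\tfrac{a_j+3}{5},\tfrac{a_j+4}{5},\tfrac{a_j+5}{5},\tfrac{a_j+6}{5}\Big\}_{j=1}^{p};\\ \tfrac35,\tfrac45,\tfrac65,\tfrac75,\Big\{\tfrac{b_j+2}{5},\tfrac{b_j+3}{5},\tfrac{b_j+4}{5},\tfrac{b_j+5}{5},\tfrac{b_j+6}{5}\Big\}_{j=1}^{q};\end{array}\left(\frac{cx^2}{5^{1+q-p}}\right)^5\right],$$ where the braces denote the lists of parameters obtained for $j=1,\dots,p$ (resp. $j=1,\dots,q$).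
   Context: The generalized hypergeometric function is ${}_pF_q\left[\begin{array}{c}\alpha_1,\dots,\alpha_p;\\\beta_1,\dots,\beta_q;\end{array}z\right]=\sum_{n=0}^{\infty}\frac{(\alpha_1)_n\cdots(\alpha_p)_n}{(\beta_1)_n\cdots(\beta_q)_n}\frac{z^n}{n!}$, with $(\lambda)_n=\lambda(\lambda+1)\cdots(\lambda+n-1)$, $(\lambda)_0=1$; in particular $(\lambda)_2=\lambda(\lambda+1)$. Values of parameters and variables for which the expressions do not make sense are excluded. *)

theory Defs
  imports "HOL-Analysis.Analysis"
begin

definition hypergeom :: "complex list \<Rightarrow> complex list \<Rightarrow> complex \<Rightarrow> complex" where
  "hypergeom as bs z =
     (\<Sum>n. (\<Prod>a\<leftarrow>as. pochhammer a n) / (\<Prod>b\<leftarrow>bs. pochhammer b n) * z ^ n / fact n)"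

definition split5 :: "complex list \<Rightarrow> complex list" where
  "split5 cs = concat (map (\<lambda>a. map (\<lambda>k. (a + of_nat k) / 5) [2..<7]) cs)"

end

theory Submission
  imports Defs
begin

text \<open>
  Write the series as \<Sum> r(n) z^n with r(n) = \<Prod>(a)_n / \<Prod>(b)_n, reading n! = (1)_n as one
  more lower parameter 1. Summing \<alpha>^k F(w \<alpha>^(2k)) over the fifth roots of unity \<alpha>^k keeps
  exactly the terms with 5 | 1 + 2n, i.e. n = 5m + 2, each multiplied by 5. Writing
  (a)_(5m+2) = (a)_2 (a+2)_(5m) and applying Gauss' multiplication formula
  (z)_(5m) = 5^(5m) \<Prod>_(j<5) ((z+j)/5)_m to every parameter turns these into the terms of the
  5p F 5q+4 series: the lower parameter 1 splits into 3/5, 4/5, 1, 6/5, 7/5, and this new 1 is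
  again read as the factorial. Both series converge by the ratio test.
\<close>

lemma prod_list_map_mult:
  "(\<Prod>x\<leftarrow>xs. f x * g x) = (\<Prod>x\<leftarrow>xs. f x) * (\<Prod>x\<leftarrow>xs. g x :: 'a::comm_monoid_mult)"
  by (induction xs) (simp_all add: mult_ac)

lemma pochhammer_mult:
  fixes z :: "'a::field_char_0"
  assumes "r > 0"
  shows "pochhammer z (r * n) = of_nat r ^ (r * n) * (\<Prod>j<r. pochhammer ((z + of_nat j) / of_nat r) n)"
proof (induction n)
  case 0
  show ?case by simp
next
  case (Suc n)
  have r: "(of_nat r :: 'a) \<noteq> 0" using assms by simp
  have "pochhammer (z + of_nat (r * n)) r = (\<Prod>j<r. of_nat r * ((z + of_nat j) / of_nat r + of_nat n))"
    unfolding pochhammer_prod using r by (intro prod.cong) (auto simp: field_simps)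
  also have "\<dots> = of_nat r ^ r * (\<Prod>j<r. (z + of_nat j) / of_nat r + of_nat n)"
    by (simp add: prod.distrib)
  finally have step: "pochhammer (z + of_nat (r * n)) r = \<dots>" .
  have "pochhammer z (r * Suc n) = pochhammer z (r * n) * pochhammer (z + of_nat (r * n)) r"
    by (simp only: mult_Suc_right add.commute[of r "r * n"] pochhammer_product')
  also have "\<dots> = of_nat r ^ (r * Suc n) * (\<Prod>j<r. pochhammer ((z + of_nat j) / of_nat r) (Suc n))"
    unfolding Suc.IH step pochhammer_Suc prod.distrib by (simp add: power_add mult_ac)
  finally show ?case .
qed

definition poch_quotient :: "'a::field list \<Rightarrow> 'a list \<Rightarrow> nat \<Rightarrow> 'a" where
  "poch_quotient as bs n = (\<Prod>a\<leftarrow>as. pochhammer a n) / (\<Prod>b\<leftarrow>bs. pochhammer b n)"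

lemma poch_quotient_Suc:
  "poch_quotient as bs (Suc n) =
     poch_quotient as bs n * ((\<Prod>a\<leftarrow>as. a + of_nat n) / (\<Prod>b\<leftarrow>bs. b + of_nat n))"
  unfolding poch_quotient_def pochhammer_Suc prod_list_map_mult by (rule times_divide_times_eq[symmetric])

lemma hypergeom_poch_quotient:
  "hypergeom as bs z = (\<Sum>n. poch_quotient as (1 # bs) n * z ^ n)"
  unfolding hypergeom_def poch_quotient_def by (simp add: pochhammer_fact mult_ac)

lemma filterlim_shift_at_infinity:
  "filterlim (\<lambda>n. b + of_nat n :: 'a::real_normed_field) at_infinity sequentially"
  by (rule tendsto_add_filterlim_at_infinity[OF tendsto_const tendsto_of_nat])

lemma tendsto_shift_quotient:
  fixes a b :: "'a::real_normed_field"
  shows "(\<lambda>n. (a + of_nat n) / (b + of_nat n)) \<longlonglongrightarrow> 1"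
proof -
  note unbounded = filterlim_shift_at_infinity[of b]
  have "(\<lambda>n. 1 + (a - b) / (b + of_nat n)) \<longlonglongrightarrow> 1 + 0"
    by (intro tendsto_add tendsto_const tendsto_divide_0[OF tendsto_const unbounded])
  moreover have "eventually (\<lambda>n. 1 + (a - b) / (b + of_nat n) = (a + of_nat n) / (b + of_nat n)) sequentially"
    using filterlim_at_infinity_imp_eventually_ne[OF unbounded, of 0]
    by eventually_elim (simp add: field_simps)
  ultimately show ?thesis
    by (simp add: Lim_transform_eventually)
qed

lemma tendsto_inverse_prod_shift:
  fixes bs :: "'a::real_normed_field list"
  shows "(\<lambda>n. 1 / (\<Prod>b\<leftarrow>bs. b + of_nat n)) \<longlonglongrightarrow> (if bs = [] then 1 else 0)"
proof (induction bs)
  case (Cons b bs)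
  note unbounded = filterlim_shift_at_infinity[of b]
  have "(\<lambda>n. 1 / (b + of_nat n) * (1 / (\<Prod>b\<leftarrow>bs. b + of_nat n))) \<longlonglongrightarrow> 0 * (if bs = [] then 1 else 0)"
    by (intro tendsto_mult Cons tendsto_divide_0[OF tendsto_const unbounded])
  then show ?case by simp
qed simp

lemma tendsto_prod_shift_quotient:
  fixes as bs :: "'a::real_normed_field list"
  assumes "length as \<le> length bs"
  shows "(\<lambda>n. (\<Prod>a\<leftarrow>as. a + of_nat n) / (\<Prod>b\<leftarrow>bs. b + of_nat n))
           \<longlonglongrightarrow> (if length as = length bs then 1 else 0)"
  using assms
proof (induction as arbitrary: bs)
  case Nil
  show ?case using tendsto_inverse_prod_shift[of bs] by simp
next
  case (Cons a as)
  then obtain b bs' where bs: "bs = b # bs'" and len: "length as \<le> length bs'"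
    by (cases bs) auto
  have "(\<lambda>n. (a + of_nat n) / (b + of_nat n) * ((\<Prod>a\<leftarrow>as. a + of_nat n) / (\<Prod>b\<leftarrow>bs'. b + of_nat n)))
          \<longlonglongrightarrow> 1 * (if length as = length bs' then 1 else 0)"
    by (intro tendsto_mult tendsto_shift_quotient Cons.IH len)
  then show ?case
    unfolding bs by (simp add: times_divide_times_eq)
qed

lemma summable_ratio_tendsto:
  fixes f :: "nat \<Rightarrow> 'a::{banach, real_normed_algebra}"
  assumes ratio: "\<And>n. f (Suc n) = \<rho> n * f n" and lim: "\<rho> \<longlonglongrightarrow> L" and "norm L < 1"
  shows "summable f"
proof -
  have "eventually (\<lambda>n. norm (\<rho> n) < (norm L + 1) / 2) sequentially"
    using tendsto_norm[OF lim] \<open>norm L < 1\<close> by (intro order_tendstoD) auto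
  then obtain N where N: "\<And>n. n \<ge> N \<Longrightarrow> norm (\<rho> n) < (norm L + 1) / 2"
    unfolding eventually_sequentially by blast
  show ?thesis
  proof (rule summable_ratio_test)
    show "(norm L + 1) / 2 < 1" using \<open>norm L < 1\<close> by simp
    fix n assume "n \<ge> N"
    have "norm (f (Suc n)) \<le> norm (\<rho> n) * norm (f n)"
      unfolding ratio by (rule norm_mult_ineq)
    also have "\<dots> \<le> (norm L + 1) / 2 * norm (f n)"
      using N[OF \<open>n \<ge> N\<close>] by (intro mult_right_mono) auto
    finally show "norm (f (Suc n)) \<le> (norm L + 1) / 2 * norm (f n)" .
  qed
qed

lemma summable_poch_quotient_series:
  fixes as bs :: "'a::{real_normed_field, banach} list"
  assumes "length as \<le> length bs" and "length as = length bs \<Longrightarrow> norm z < 1"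
  shows "summable (\<lambda>n. poch_quotient as bs n * z ^ n)"
proof (rule summable_ratio_tendsto)
  let ?\<rho> = "\<lambda>n. z * ((\<Prod>a\<leftarrow>as. a + of_nat n) / (\<Prod>b\<leftarrow>bs. b + of_nat n))"
  show "poch_quotient as bs (Suc n) * z ^ Suc n = ?\<rho> n * (poch_quotient as bs n * z ^ n)" for n
    by (simp add: poch_quotient_Suc mult_ac)
  show "?\<rho> \<longlonglongrightarrow> z * (if length as = length bs then 1 else 0)"
    by (intro tendsto_mult tendsto_const tendsto_prod_shift_quotient assms(1))
  show "norm (z * (if length as = length bs then 1 else 0)) < 1"
    using assms(2) by simp
qed

lemma pochhammer_5m2:
  "pochhammer (a::'a::field_char_0) (5 * m + 2) =
     pochhammer a 2 * 5 ^ (5 * m) * (\<Prod>k\<leftarrow>[2..<7]. pochhammer ((a + of_nat k) / 5) m)"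
proof -
  have "pochhammer a (5 * m + 2) = pochhammer a 2 * pochhammer (a + 2) (5 * m)"
    using pochhammer_product'[of a 2 "5 * m"] by (simp add: add.commute)
  also have "pochhammer (a + 2) (5 * m) = 5 ^ (5 * m) * (\<Prod>j<5. pochhammer ((a + 2 + of_nat j) / 5) m)"
    using pochhammer_mult[of 5 "a + 2" m] by simp
  finally show ?thesis
    by (simp add: eval_nat_numeral lessThan_Suc upt_rec mult_ac add_ac)
qed

lemma prod_pochhammer_split5:
  "(\<Prod>b\<leftarrow>split5 as. pochhammer b m) = (\<Prod>a\<leftarrow>as. \<Prod>k\<leftarrow>[2..<7]. pochhammer ((a + of_nat k) / 5) m)"
  by (induction as) (simp_all add: split5_def)

lemma prod_pochhammer_5m2:
  "(\<Prod>a\<leftarrow>as. pochhammer (a::complex) (5 * m + 2)) =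
     (\<Prod>a\<leftarrow>as. pochhammer a 2) * 5 ^ (5 * m * length as) * (\<Prod>b\<leftarrow>split5 as. pochhammer b m)"
  unfolding pochhammer_5m2 prod_list_map_mult prod_pochhammer_split5 by (simp add: power_mult map_replicate_const)

lemma length_split5 [simp]: "length (split5 cs) = 5 * length cs"
  by (induction cs) (simp_all add: split5_def)

lemma poch_quotient_5m2:
  "poch_quotient as bs (5 * m + 2) =
     poch_quotient as bs 2 * poch_quotient (split5 as) (split5 bs) m * (5 ^ (5 * m * length as) / 5 ^ (5 * m * length bs))"
  unfolding poch_quotient_def prod_pochhammer_5m2 by (simp add: times_divide_times_eq mult_ac)

lemma hypergeom_split5:
  "hypergeom (split5 as) ([3/5, 4/5, 6/5, 7/5] @ split5 bs) z =
     (\<Sum>n. poch_quotient (split5 as) (split5 (1 # bs)) n * z ^ n)"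
  unfolding hypergeom_poch_quotient poch_quotient_def by (simp add: split5_def upt_rec mult_ac)

lemma poch_quotient_term_5m2:
  fixes as bs :: "complex list"
  defines "P \<equiv> (5::complex) powi (1 + int (length bs) - int (length as))"
  shows "poch_quotient as (1 # bs) (5 * m + 2) * w ^ (5 * m + 2) =
     w^2 / 2 * ((\<Prod>a\<leftarrow>as. pochhammer a 2) / (\<Prod>b\<leftarrow>bs. pochhammer b 2)) *
     (poch_quotient (split5 as) (split5 (1 # bs)) m * ((w / P) ^ 5) ^ m)"
proof -
  have "P * 5 ^ length as = 5 powi ((1 + int (length bs) - int (length as)) + int (length as))"
    unfolding P_def by (subst power_int_add) simp_all
  also have "\<dots> = 5 ^ length (1 # bs)"
    by (simp add: power_int_add)
  finally have P5: "P * 5 ^ length as = 5 ^ length (1 # bs)" .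
  have "(5::complex) ^ (5 * m * length (1 # bs)) = (P * 5 ^ length as) ^ (5 * m)"
    unfolding P5 by (simp only: power_mult mult.commute)
  also have "\<dots> = P ^ (5 * m) * 5 ^ (5 * m * length as)"
    by (simp only: power_mult_distrib power_mult mult.commute)
  finally have scale: "(5::complex) ^ (5 * m * length as) / 5 ^ (5 * m * length (1 # bs)) = 1 / P ^ (5 * m)"
    by simp
  have "poch_quotient as (1 # bs) 2 = (\<Prod>a\<leftarrow>as. pochhammer a 2) / (\<Prod>b\<leftarrow>bs. pochhammer b 2) / 2"
    by (simp add: poch_quotient_def pochhammer_fact[symmetric])
  moreover have "((w / P) ^ 5) ^ m = w ^ (5 * m) / P ^ (5 * m)"
    by (simp add: power_divide power_mult)
  ultimately show ?thesis
    unfolding poch_quotient_5m2 scale power_add by (simp add: field_simps)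
qed

lemma sum_powers_root_unity:
  assumes "N > 0"
  shows "(\<Sum>k<N. (exp (2 * pi * \<i> / of_nat N) ^ m) ^ k) = (if N dvd m then of_nat N else 0)"
proof -
  define \<zeta> where "\<zeta> = exp (2 * pi * \<i> / of_nat N) ^ m"
  have \<zeta>: "\<zeta> = exp (2 * of_real pi * \<i> * of_nat m / of_nat N)"
    unfolding \<zeta>_def exp_of_nat_mult[symmetric] by (simp add: field_simps)
  show ?thesis
  proof (cases "N dvd m")
    case True
    then have "\<zeta> = 1" using complex_root_unity_eq_1 assms \<zeta> by simp
    then show ?thesis using True by (simp add: \<zeta>_def)
  next
    case False
    then have "\<zeta> \<noteq> 1" using complex_root_unity_eq_1 assms \<zeta> by simp
    moreover have "\<zeta> ^ N = 1" using complex_root_unity assms \<zeta> by simp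
    ultimately show ?thesis
      using False unfolding \<zeta>_def[symmetric] by (simp add: geometric_sum)
  qed
qed

lemma root_unity_filter_sums:
  fixes r :: "nat \<Rightarrow> complex" and N :: nat
  defines "\<omega> \<equiv> exp (2 * pi * \<i> / of_nat N)"
  assumes "N > 0" and summable: "\<And>k. summable (\<lambda>n. r n * (\<omega> ^ (b * k) * w) ^ n)"
  shows "(\<lambda>n. if N dvd a + b * n then of_nat N * (r n * w ^ n) else 0)
           sums (\<Sum>k<N. \<omega> ^ (a * k) * (\<Sum>n. r n * (\<omega> ^ (b * k) * w) ^ n))"
proof -
  have "(\<lambda>n. \<Sum>k<N. \<omega> ^ (a * k) * (r n * (\<omega> ^ (b * k) * w) ^ n))
          sums (\<Sum>k<N. \<omega> ^ (a * k) * (\<Sum>n. r n * (\<omega> ^ (b * k) * w) ^ n))"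
    by (intro sums_sum sums_mult summable_sums summable)
  moreover have "(\<Sum>k<N. \<omega> ^ (a * k) * (r n * (\<omega> ^ (b * k) * w) ^ n))
                   = (if N dvd a + b * n then of_nat N * (r n * w ^ n) else 0)" for n
  proof -
    have "(\<Sum>k<N. \<omega> ^ (a * k) * (r n * (\<omega> ^ (b * k) * w) ^ n))
            = r n * w ^ n * (\<Sum>k<N. (\<omega> ^ (a + b * n)) ^ k)"
      by (simp add: sum_distrib_left power_mult_distrib power_add mult_ac flip: power_mult)
    then show ?thesis
      using sum_powers_root_unity[OF \<open>N > 0\<close>] by (simp add: \<omega>_def)
  qed
  ultimately show ?thesis by simp
qed

lemma fifth_root_unity_filter_sums:
  fixes r :: "nat \<Rightarrow> complex"
  defines "\<omega> \<equiv> exp (2 * pi * \<i> / 5)"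
  assumes summable: "\<And>k. summable (\<lambda>n. r n * (\<omega> ^ (2 * k) * w) ^ n)"
  shows "(\<lambda>m. 5 * (r (5 * m + 2) * w ^ (5 * m + 2)))
           sums (\<Sum>k=0..4. \<omega> ^ k * (\<Sum>n. r n * (\<omega> ^ (2 * k) * w) ^ n))"
proof -
  let ?f = "\<lambda>n. if 5 dvd 1 + 2 * n then 5 * (r n * w ^ n) else 0"
  have "{0..4} = {..<5::nat}"
    by auto
  then have "?f sums (\<Sum>k=0..4. \<omega> ^ k * (\<Sum>n. r n * (\<omega> ^ (2 * k) * w) ^ n))"
    using root_unity_filter_sums[of 5 r 2 w 1] summable unfolding \<omega>_def of_nat_numeral by simp
  moreover have "strict_mono (\<lambda>m. 5 * m + 2 :: nat)"
    by (rule strict_monoI) simp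
  moreover have "?f n = 0" if "n \<notin> range (\<lambda>m. 5 * m + 2)" for n
  proof -
    have "n \<noteq> 5 * (n div 5) + 2"
      using that by blast
    then show ?thesis by presburger
  qed
  ultimately have "(\<lambda>m. ?f (5 * m + 2)) sums (\<Sum>k=0..4. \<omega> ^ k * (\<Sum>n. r n * (\<omega> ^ (2 * k) * w) ^ n))"
    using sums_mono_reindex[of "\<lambda>m. 5 * m + 2" ?f] by blast
  moreover have "?f (5 * m + 2) = 5 * (r (5 * m + 2) * w ^ (5 * m + 2))" for m
  proof -
    have "5 dvd 1 + 2 * (5 * m + 2)" by presburger
    then show ?thesis by (simp only: if_True)
  qed
  ultimately show ?thesis
    by (simp only:)
qed

theorem theorem8:
  fixes c x :: complex and as bs :: "complex list" and p q :: nat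
  assumes "p = length as" and "q = length bs"
    and "\<forall>b\<in>set bs. \<forall>n::nat. b \<noteq> - of_nat n"
    and "5 * p \<le> 5 * q + 4 \<or>
         (p = q + 1 \<and> norm ((c * x^2 / (5::complex) powi (1 + int q - int p)) ^ 5) < 1)"
  shows "(\<Sum>k=0..4. (exp (2 * pi * \<i> / 5)) ^ k *
            hypergeom as bs (c * (x * (exp (2 * pi * \<i> / 5)) ^ k)^2))
       = 5 * c^2 * x^4 / 2 * ((\<Prod>a\<leftarrow>as. pochhammer a 2) / (\<Prod>b\<leftarrow>bs. pochhammer b 2))
         * hypergeom (split5 as) ([3/5, 4/5, 6/5, 7/5] @ split5 bs)
             ((c * x^2 / (5::complex) powi (1 + int q - int p)) ^ 5)"
proof -
  define \<omega> where "\<omega> = exp (2 * pi * \<i> / 5)"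
  define w where "w = c * x^2"
  define u where "u = (w / (5::complex) powi (1 + int q - int p)) ^ 5"
  define K where "K = 5 * c^2 * x^4 / 2 * ((\<Prod>a\<leftarrow>as. pochhammer a 2) / (\<Prod>b\<leftarrow>bs. pochhammer b 2))"
  let ?r = "poch_quotient as (1 # bs)" and ?s = "poch_quotient (split5 as) (split5 (1 # bs))"
  have conv: "p \<le> q + 1" "p = q + 1 \<Longrightarrow> norm u < 1"
    using assms(4) unfolding u_def w_def by auto
  have "norm w < 1" if "p = q + 1"
    using conv(2)[OF that] that by (simp add: u_def norm_power power_less_one_iff)
  then have "summable (\<lambda>n. ?r n * (\<omega> ^ (2 * k) * w) ^ n)" for k
    using conv(1) assms(1,2) by (intro summable_poch_quotient_series) (auto simp: \<omega>_def norm_mult norm_power)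
  then have filtered: "(\<lambda>m. 5 * (?r (5 * m + 2) * w ^ (5 * m + 2)))
               sums (\<Sum>k=0..4. \<omega> ^ k * hypergeom as bs (c * (x * \<omega> ^ k)^2))"
    using fifth_root_unity_filter_sums[of ?r w]
    by (simp add: \<omega>_def w_def hypergeom_poch_quotient power_mult_distrib mult_ac flip: power_mult)
  have termwise: "5 * (?r (5 * m + 2) * w ^ (5 * m + 2)) = K * (?s m * u ^ m)" for m
    using poch_quotient_term_5m2[of as bs m w] assms(1,2)
    by (simp add: K_def u_def w_def power_mult_distrib flip: power_mult)
  have "summable (\<lambda>m. ?s m * u ^ m)"
    using conv assms(1,2) by (intro summable_poch_quotient_series) auto
  then have "(\<lambda>m. K * (?s m * u ^ m)) sums (K * (\<Sum>m. ?s m * u ^ m))"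
    by (intro sums_mult summable_sums)
  with filtered have "(\<Sum>k=0..4. \<omega> ^ k * hypergeom as bs (c * (x * \<omega> ^ k)^2)) = K * (\<Sum>m. ?s m * u ^ m)"
    unfolding termwise by (rule sums_unique2)
  then show ?thesis
    unfolding hypergeom_split5 \<omega>_def K_def u_def w_def .
qed

end
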